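(* Let $T>0$ and let $u$ be a distributional solution on $[-T,T]\times\mathbb{R}^2$ of the BBM-KP-II equation $u_t+u_x+uu_x-u_{xxt}+\partial_x^{-1}u_{yy}=0$. If for every $t\in[-T,T]$ the distribution $u(t)$ has compact support, then for every $t\in[-T,T]$ and every $g\in C^\infty(\mathbb{R})$, $$\big\langle e^{x}g(y)\,(u-u_{xx})(t),\,1\big\rangle_{\mathcal{E}'(\mathbb{R}^2),\,\mathcal{E}(\mathbb{R}^2)}=0.$$
   Context: $\mathcal{E}(\mathbb{R}^2)=C^\infty(\mathbb{R}^2)$ and $\mathcal{E}'(\mathbb{R}^2)$ is its dual, the space of compactly supported distributions; $\langle\cdot,\cdot\rangle$ is the duality pairing. $\partial_x^{-1}$ is the Fourier multiplier $1/(i\xi)$ in the $x$-frequency variable $\xi$. A family $(T_t)_{t\in I}$ of distributions is in $C^k(I,\mathcal{D}'(\Omega))$ if $t\mapsto\langle T_t,\varphi\rangle$ is $C^k$ for every test function $\varphi$; a distributional solution is such a family (of class $C^1$ in $t$) satisfying the equation in the sense of distributions. *)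

theory Defs
  imports "HOL-Analysis.Analysis"
begin

type_synonym fn2 = "real \<times> real \<Rightarrow> real"
type_synonym distr = "fn2 \<Rightarrow> real"

definition dx :: "fn2 \<Rightarrow> fn2" where
  "dx f = (\<lambda>(x, y). deriv (\<lambda>s. f (s, y)) x)"

definition dy :: "fn2 \<Rightarrow> fn2" where
  "dy f = (\<lambda>(x, y). deriv (\<lambda>s. f (x, s)) y)"

inductive_set partials :: "fn2 \<Rightarrow> fn2 set" for f :: fn2 where
  self: "f \<in> partials f"
| step_x: "g \<in> partials f \<Longrightarrow> dx g \<in> partials f"
| step_y: "g \<in> partials f \<Longrightarrow> dy g \<in> partials f"

definition smooth2 :: "fn2 \<Rightarrow> bool" where
  "smooth2 f \<longleftrightarrow> (\<forall>g \<in> partials f. continuous_on UNIV g \<and>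
      (\<forall>x y. (\<lambda>s. g (s, y)) differentiable (at x) \<and> (\<lambda>s. g (x, s)) differentiable (at y)))"

definition smooth1 :: "(real \<Rightarrow> real) \<Rightarrow> bool" where
  "smooth1 g \<longleftrightarrow> (\<forall>n x. ((deriv ^^ n) g) differentiable (at x))"

definition tsupp :: "fn2 \<Rightarrow> (real \<times> real) set" where
  "tsupp f = closure {p. f p \<noteq> 0}"

definition test_fun :: "fn2 \<Rightarrow> bool" where
  "test_fun \<phi> \<longleftrightarrow> smooth2 \<phi> \<and> compact (tsupp \<phi>)"

definition Dmult :: "nat \<Rightarrow> nat \<Rightarrow> fn2 \<Rightarrow> fn2" where
  "Dmult a b \<phi> = (dx ^^ a) ((dy ^^ b) \<phi>)"

definition is_distribution :: "distr \<Rightarrow> bool" where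
  "is_distribution T \<longleftrightarrow>
     (\<forall>\<phi> \<psi> c. test_fun \<phi> \<and> test_fun \<psi> \<longrightarrow>
         T (\<lambda>p. \<phi> p + \<psi> p) = T \<phi> + T \<psi> \<and> T (\<lambda>p. c * \<phi> p) = c * T \<phi>) \<and>
     (\<forall>K. compact K \<longrightarrow> (\<exists>C N. \<forall>\<phi>. test_fun \<phi> \<and> tsupp \<phi> \<subseteq> K \<longrightarrow>
         \<bar>T \<phi>\<bar> \<le> C * (\<Sum>a\<le>N. \<Sum>b\<le>N. (SUP p. \<bar>Dmult a b \<phi> p\<bar>))))"

text \<open>Operations on distributions (only their values on test functions matter).\<close>
definition ddx :: "distr \<Rightarrow> distr" where
  "ddx T = (\<lambda>\<phi>. - T (dx \<phi>))"

definition ddy :: "distr \<Rightarrow> distr" where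
  "ddy T = (\<lambda>\<phi>. - T (dy \<phi>))"

definition dmult :: "fn2 \<Rightarrow> distr \<Rightarrow> distr" where
  "dmult f T = (\<lambda>\<phi>. T (\<lambda>p. f p * \<phi> p))"

definition dminus :: "distr \<Rightarrow> distr \<Rightarrow> distr" where
  "dminus S T = (\<lambda>\<phi>. S \<phi> - T \<phi>)"

definition loc_int :: "fn2 \<Rightarrow> bool" where
  "loc_int f \<longleftrightarrow> (\<forall>K. compact K \<longrightarrow> set_integrable lborel K f)"

definition fdistr :: "fn2 \<Rightarrow> distr" where
  "fdistr f = (\<lambda>\<phi>. \<integral>p. f p * \<phi> p \<partial>lborel)"

definition vanishes_on :: "distr \<Rightarrow> (real \<times> real) set \<Rightarrow> bool" where
  "vanishes_on T U \<longleftrightarrow> (\<forall>\<phi>. test_fun \<phi> \<and> tsupp \<phi> \<subseteq> U \<longrightarrow> T \<phi> = 0)"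

definition dsupp :: "distr \<Rightarrow> (real \<times> real) set" where
  "dsupp T = UNIV - \<Union>{U. open U \<and> vanishes_on T U}"

text \<open>Duality pairing E'(R^2) x E(R^2) for a compactly supported distribution T:
  <T, psi> = T(chi psi), chi a test function equal to 1 near the support of T.\<close>
definition pairE :: "distr \<Rightarrow> fn2 \<Rightarrow> real" where
  "pairE T \<psi> = T (\<lambda>p. (SOME chi. test_fun chi \<and>
        (\<exists>U. open U \<and> dsupp T \<subseteq> U \<and> (\<forall>q\<in>U. chi q = 1))) p * \<psi> p)"

text \<open>Distributional solution of BBM-KP-II
   u_t + u_x + u u_x - u_xxt + dx^{-1} u_yy = 0  on [-T,T] \<times> R^2.
  u(t) is a function with u(t), u(t)^2 locally integrable (so u u_x = (u^2/2)_x makes sense);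
  t \<mapsto> <u(t),phi> is C^1 on [-T,T]; the term dx^{-1} u_yy is a family of distributions
  w(t) with dx w(t) = dyy u(t).\<close>
definition bbm_kp_solution :: "real \<Rightarrow> (real \<Rightarrow> fn2) \<Rightarrow> bool" where
  "bbm_kp_solution T u \<longleftrightarrow>
     (\<forall>t\<in>{-T..T}. loc_int (u t) \<and> loc_int (\<lambda>p. (u t p)\<^sup>2)) \<and>
     (\<forall>\<phi>. test_fun \<phi> \<longrightarrow> (\<exists>u'. continuous_on {-T..T} u' \<and>
        (\<forall>t\<in>{-T..T}. ((\<lambda>s. fdistr (u s) \<phi>) has_real_derivative u' t) (at t within {-T..T})))) \<and>
     (\<exists>w. (\<forall>t\<in>{-T..T}. is_distribution (w t) \<and>
            (\<forall>\<phi>. test_fun \<phi> \<longrightarrow> ddx (w t) \<phi> = ddy (ddy (fdistr (u t))) \<phi>)) \<and>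
          (\<forall>t\<in>{-T..T}. \<forall>\<phi>. test_fun \<phi> \<longrightarrow>
             (\<exists>d1 d2.
                ((\<lambda>s. fdistr (u s) \<phi>) has_real_derivative d1) (at t within {-T..T}) \<and>
                ((\<lambda>s. ddx (ddx (fdistr (u s))) \<phi>) has_real_derivative d2) (at t within {-T..T}) \<and>
                d1 + ddx (fdistr (u t)) \<phi> + ddx (fdistr (\<lambda>p. (u t p)\<^sup>2 / 2)) \<phi> - d2 + w t \<phi> = 0)))"

end

theory Submission
  imports Defs "HOL-Computational_Algebra.Polynomial"
begin

text \<open>Since dx (e^x g(y)) = e^x g(y), the test function (1 - dx^2)(e^x g(y) chi) vanishes
  wherever the cutoff chi equals 1, in particular on a neighbourhood of the support of u(t), so
  pairing (u - u_xx)(t) with e^x g(y) gives 0. What has to be proved is that a distribution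
  annihilates test functions supported off its support: a smooth partition of unity on a fine grid
  splits such a test function into pieces, each supported in one of the open sets on which the
  distribution vanishes. This also makes the pairing independent of the cutoff. Only the local
  integrability of u(t) and the compactness of its support are used, not the equation itself.\<close>

section \<open>Smooth functions of one variable\<close>

lemma differentiable_at_iff_field_differentiable:
  fixes f :: "real \<Rightarrow> real"
  shows "f differentiable at x \<longleftrightarrow> f field_differentiable at x"
  using DERIV_deriv_iff_real_differentiable DERIV_deriv_iff_field_differentiable by blast

definition differentiable_upto :: "nat \<Rightarrow> (real \<Rightarrow> real) \<Rightarrow> bool" where
  "differentiable_upto k h \<longleftrightarrow> (\<forall>m\<le>k. \<forall>x. (deriv ^^ m) h differentiable (at x))"

lemma smooth1_iff_differentiable_upto: "smooth1 h \<longleftrightarrow> (\<forall>k. differentiable_upto k h)"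
  unfolding smooth1_def differentiable_upto_def by auto

lemma funpow_deriv_Suc: "(deriv ^^ Suc m) h = (deriv ^^ m) (deriv h)"
  by (simp add: funpow_Suc_right del: funpow.simps)

lemma differentiable_upto_Suc:
  "differentiable_upto (Suc k) h \<longleftrightarrow> (\<forall>x. h differentiable at x) \<and> differentiable_upto k (deriv h)"
proof -
  have "(\<forall>m\<le>Suc k. P m) \<longleftrightarrow> P 0 \<and> (\<forall>m\<le>k. P (Suc m))" for P :: "nat \<Rightarrow> bool"
    by (metis Suc_le_mono le0 not0_implies_Suc)
  then show ?thesis
    unfolding differentiable_upto_def by (simp add: funpow_deriv_Suc del: funpow.simps)
qed

lemma differentiable_upto_Suc_imp: "differentiable_upto (Suc k) h \<Longrightarrow> differentiable_upto k h"
  unfolding differentiable_upto_def by auto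

lemma differentiable_upto_differentiable:
  "differentiable_upto k h \<Longrightarrow> h differentiable at x"
  unfolding differentiable_upto_def by (metis funpow_0 le0)

lemma differentiable_upto_const: "differentiable_upto k (\<lambda>x. c)"
proof (induction k arbitrary: c)
  case 0 then show ?case by (simp add: differentiable_upto_def)
next
  case (Suc k) then show ?case by (simp add: differentiable_upto_Suc)
qed

lemma differentiable_upto_add:
  "differentiable_upto k a \<Longrightarrow> differentiable_upto k b \<Longrightarrow> differentiable_upto k (\<lambda>x. a x + b x)"
proof (induction k arbitrary: a b)
  case 0 then show ?case by (auto simp: differentiable_upto_def)
next
  case (Suc k)
  then have "deriv (\<lambda>x. a x + b x) = (\<lambda>x. deriv a x + deriv b x)"
    by (auto intro!: deriv_add simp: differentiable_at_iff_field_differentiable[symmetric]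
        differentiable_upto_differentiable)
  with Suc show ?case by (auto simp: differentiable_upto_Suc)
qed

lemma differentiable_upto_mult:
  "differentiable_upto k a \<Longrightarrow> differentiable_upto k b \<Longrightarrow> differentiable_upto k (\<lambda>x. a x * b x)"
proof (induction k arbitrary: a b)
  case 0 then show ?case by (auto simp: differentiable_upto_def)
next
  case (Suc k)
  then have "deriv (\<lambda>x. a x * b x) = (\<lambda>x. a x * deriv b x + deriv a x * b x)"
    by (auto intro!: deriv_mult simp: differentiable_at_iff_field_differentiable[symmetric]
        differentiable_upto_differentiable)
  moreover have "differentiable_upto k (\<lambda>x. a x * deriv b x + deriv a x * b x)"
    using Suc by (intro differentiable_upto_add Suc.IH)
      (auto simp: differentiable_upto_Suc intro: differentiable_upto_Suc_imp)
  ultimately show ?case using Suc.prems by (auto simp: differentiable_upto_Suc)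
qed

lemma differentiable_upto_inverse:
  assumes "\<And>k. differentiable_upto k d" and "\<And>x. d x \<noteq> 0"
  shows "differentiable_upto k (\<lambda>x. inverse (d x))"
proof (induction k)
  case 0
  show ?case using assms differentiable_upto_differentiable[OF assms(1)]
    by (auto simp: differentiable_upto_def differentiable_at_iff_field_differentiable
        intro: field_differentiable_inverse)
next
  case (Suc k)
  have "deriv (\<lambda>x. inverse (d x)) = (\<lambda>x. ((-1) * deriv d x) * (inverse (d x) * inverse (d x)))"
    using assms differentiable_upto_differentiable[OF assms(1)]
    by (auto simp: power2_eq_square divide_inverse differentiable_at_iff_field_differentiable)
  moreover have "differentiable_upto k (\<lambda>x. ((-1) * deriv d x) * (inverse (d x) * inverse (d x)))"
    using assms(1)[of "Suc k"]
    by (intro differentiable_upto_mult differentiable_upto_const Suc.IH)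
      (simp add: differentiable_upto_Suc)
  ultimately show ?case
    by (simp add: differentiable_upto_Suc differentiable_upto_differentiable[OF Suc.IH])
qed

lemma differentiable_affine_compose:
  fixes h :: "real \<Rightarrow> real"
  shows "h differentiable at (a * x + b) \<Longrightarrow> (\<lambda>x. h (a * x + b)) differentiable at x"
  unfolding differentiable_at_iff_field_differentiable
  by (rule field_differentiable_compose[where f = "\<lambda>x. a * x + b", unfolded o_def])
    (auto intro: field_differentiable_add field_differentiable_mult field_differentiable_ident
      field_differentiable_const)

lemma differentiable_upto_affine:
  "differentiable_upto k h \<Longrightarrow> differentiable_upto k (\<lambda>x. h (a * x + b))"
proof (induction k arbitrary: h)
  case 0
  then show ?case by (simp add: differentiable_upto_def differentiable_affine_compose)
next
  case (Suc k)
  have "deriv (\<lambda>x. h (a * x + b)) = (\<lambda>x. a * deriv h (a * x + b))"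
    using differentiable_upto_differentiable[OF Suc.prems]
    by (auto intro!: deriv_compose_linear' simp: differentiable_at_iff_field_differentiable[symmetric])
  moreover have "differentiable_upto k (\<lambda>x. a * deriv h (a * x + b))"
    using Suc by (intro differentiable_upto_mult differentiable_upto_const Suc.IH)
      (simp add: differentiable_upto_Suc)
  ultimately show ?case
    using differentiable_upto_differentiable[OF Suc.IH[OF differentiable_upto_Suc_imp[OF Suc.prems]]]
    by (simp add: differentiable_upto_Suc)
qed

lemma smooth1_const: "smooth1 (\<lambda>x. c)"
  by (simp add: smooth1_iff_differentiable_upto differentiable_upto_const)

lemma smooth1_add: "smooth1 a \<Longrightarrow> smooth1 b \<Longrightarrow> smooth1 (\<lambda>x. a x + b x)"
  by (simp add: smooth1_iff_differentiable_upto differentiable_upto_add)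

lemma smooth1_mult: "smooth1 a \<Longrightarrow> smooth1 b \<Longrightarrow> smooth1 (\<lambda>x. a x * b x)"
  by (simp add: smooth1_iff_differentiable_upto differentiable_upto_mult)

lemma smooth1_inverse: "smooth1 d \<Longrightarrow> (\<And>x. d x \<noteq> 0) \<Longrightarrow> smooth1 (\<lambda>x. inverse (d x))"
  by (simp add: smooth1_iff_differentiable_upto differentiable_upto_inverse)

lemma smooth1_affine: "smooth1 h \<Longrightarrow> smooth1 (\<lambda>x. h (a * x + b))"
  by (simp add: smooth1_iff_differentiable_upto differentiable_upto_affine)

lemma smooth1_exp: "smooth1 exp"
proof -
  have deriv_exp: "(deriv ^^ n) exp = exp" for n
    by (induction n) (simp_all add: DERIV_imp_deriv[OF DERIV_exp, abs_def])
  show ?thesis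
    unfolding smooth1_def deriv_exp real_differentiable_def using DERIV_exp by blast
qed

definition flat_exp :: "real \<Rightarrow> real" where
  "flat_exp t = (if t > 0 then exp (- 1 / t) else 0)"

text \<open>With s = 1/t, d/dt (P(s) exp(-1/t)) = s^2 (P(s) - P'(s)) exp(-1/t), whence the recursion.\<close>

fun flat_exp_poly :: "nat \<Rightarrow> real poly" where
  "flat_exp_poly 0 = 1"
| "flat_exp_poly (Suc n) = [:0, 0, 1:] * (flat_exp_poly n - pderiv (flat_exp_poly n))"

definition flat_exp_deriv :: "nat \<Rightarrow> real \<Rightarrow> real" where
  "flat_exp_deriv n t = (if t > 0 then poly (flat_exp_poly n) (1 / t) * exp (- 1 / t) else 0)"

lemma poly_inverse_exp_tendsto_0:
  "((\<lambda>t. poly p (1 / t) * exp (- 1 / t)) \<longlongrightarrow> 0) (at_right (0::real))"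
proof -
  have "((\<lambda>s. \<Sum>i\<le>degree p. coeff p i * (s ^ i / exp s)) \<longlongrightarrow> (\<Sum>i\<le>degree p. coeff p i * 0)) at_top"
    by (intro tendsto_sum tendsto_mult tendsto_const tendsto_power_div_exp_0)
  then have "((\<lambda>s. poly p s * inverse (exp s)) \<longlongrightarrow> 0) at_top"
    by (simp add: poly_altdef sum_distrib_right divide_inverse mult.assoc)
  from filterlim_compose[OF this filterlim_inverse_at_top_right] show ?thesis
    by (simp add: exp_minus divide_inverse)
qed

lemma has_real_derivative_flat_exp_deriv:
  "(flat_exp_deriv n has_real_derivative flat_exp_deriv (Suc n) t) (at t)"
proof -
  consider "t > 0" | "t < 0" | "t = 0" by linarith
  then show ?thesis
  proof cases
    case 1
    let ?P = "flat_exp_poly n"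
    have "((\<lambda>t. poly ?P (1 / t) * exp (- 1 / t)) has_real_derivative
        poly (pderiv ?P) (1 / t) * (- inverse (t^2)) * exp (- 1 / t)
        + poly ?P (1 / t) * (exp (- 1 / t) * inverse (t^2))) (at t)"
      using 1 by (auto intro!: derivative_eq_intros DERIV_chain2[OF poly_DERIV]
          simp: power2_eq_square field_simps)
    also have "poly (pderiv ?P) (1 / t) * (- inverse (t^2)) * exp (- 1 / t)
        + poly ?P (1 / t) * (exp (- 1 / t) * inverse (t^2)) = flat_exp_deriv (Suc n) t"
      using 1 by (simp add: flat_exp_deriv_def algebra_simps power2_eq_square divide_inverse)
    finally show ?thesis
      by (rule has_field_derivative_transform_within_open[where S = "{0<..}"])
        (use 1 in \<open>auto simp: flat_exp_deriv_def\<close>)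
  next
    case 2
    have "((\<lambda>t. 0) has_real_derivative flat_exp_deriv (Suc n) t) (at t)"
      using 2 by (simp add: flat_exp_deriv_def)
    then show ?thesis
      by (rule has_field_derivative_transform_within_open[where S = "{..<0}"])
        (use 2 in \<open>auto simp: flat_exp_deriv_def\<close>)
  next
    case 3
    \<comment> \<open>The difference quotient at 0 is again a polynomial in 1/t times exp(-1/t).\<close>
    have "((\<lambda>y. (flat_exp_deriv n y - flat_exp_deriv n 0) / (y - 0)) \<longlongrightarrow> 0) (at 0)"
    proof (rule filterlim_split_at)
      show "((\<lambda>y. (flat_exp_deriv n y - flat_exp_deriv n 0) / (y - 0)) \<longlongrightarrow> 0) (at_left 0)"
        by (rule tendsto_eventually)
          (auto simp: eventually_at_left_field flat_exp_deriv_def intro!: exI[of _ "-1"])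
      show "((\<lambda>y. (flat_exp_deriv n y - flat_exp_deriv n 0) / (y - 0)) \<longlongrightarrow> 0) (at_right 0)"
        using poly_inverse_exp_tendsto_0[of "pCons 0 (flat_exp_poly n)"]
        by (rule tendsto_cong[THEN iffD1, rotated])
          (auto simp: eventually_at_right_field flat_exp_deriv_def divide_inverse intro!: exI[of _ 1])
    qed
    then show ?thesis using 3 by (simp add: has_field_derivative_iff flat_exp_deriv_def)
  qed
qed

lemma funpow_deriv_flat_exp: "(deriv ^^ n) flat_exp = flat_exp_deriv n"
proof (induction n)
  case 0 show ?case by (auto simp: flat_exp_deriv_def flat_exp_def)
next
  case (Suc n) then show ?case
    using has_real_derivative_flat_exp_deriv by (auto intro!: DERIV_imp_deriv)
qed

lemma smooth1_flat_exp: "smooth1 flat_exp"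
  unfolding smooth1_def funpow_deriv_flat_exp real_differentiable_def
  using has_real_derivative_flat_exp_deriv by blast

definition smooth_step :: "real \<Rightarrow> real" where
  "smooth_step t = flat_exp t / (flat_exp t + flat_exp (1 - t))"

lemma smooth1_smooth_step: "smooth1 smooth_step"
proof -
  have "smooth1 (\<lambda>t. flat_exp t + flat_exp ((-1) * t + 1))"
    by (intro smooth1_add smooth1_affine smooth1_flat_exp)
  moreover have "flat_exp t + flat_exp ((-1) * t + 1) \<noteq> 0" for t
    unfolding flat_exp_def by (smt (verit) exp_gt_zero)
  ultimately have "smooth1 (\<lambda>t. flat_exp t * inverse (flat_exp t + flat_exp ((-1) * t + 1)))"
    by (intro smooth1_mult smooth1_flat_exp smooth1_inverse)
  then show ?thesis by (simp add: smooth_step_def[abs_def] divide_inverse)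
qed

lemma smooth_step_eq_0: "t \<le> 0 \<Longrightarrow> smooth_step t = 0"
  by (simp add: smooth_step_def flat_exp_def)

lemma smooth_step_eq_1: "t \<ge> 1 \<Longrightarrow> smooth_step t = 1"
  by (simp add: smooth_step_def flat_exp_def)

section \<open>Smooth functions on the plane\<close>

lemma dx_apply: "dx f p = deriv (\<lambda>s. f (s, snd p)) (fst p)"
  by (cases p) (simp add: dx_def)

lemma dy_apply: "dy f p = deriv (\<lambda>s. f (fst p, s)) (snd p)"
  by (cases p) (simp add: dy_def)

definition x_differentiable :: "fn2 \<Rightarrow> bool" where
  "x_differentiable h \<longleftrightarrow> (\<forall>x y. (\<lambda>s. h (s, y)) differentiable (at x))"

definition y_differentiable :: "fn2 \<Rightarrow> bool" where
  "y_differentiable h \<longleftrightarrow> (\<forall>x y. (\<lambda>s. h (x, s)) differentiable (at y))"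

definition regular_xy :: "fn2 \<Rightarrow> bool" where
  "regular_xy h \<longleftrightarrow> continuous_on UNIV h \<and> x_differentiable h \<and> y_differentiable h"

lemma smooth2_iff_partials_regular: "smooth2 f \<longleftrightarrow> (\<forall>g\<in>partials f. regular_xy g)"
  unfolding smooth2_def regular_xy_def x_differentiable_def y_differentiable_def by blast

lemma dx_add:
  "x_differentiable h1 \<Longrightarrow> x_differentiable h2 \<Longrightarrow> dx (\<lambda>p. h1 p + h2 p) = (\<lambda>p. dx h1 p + dx h2 p)"
  by (auto simp: dx_apply x_differentiable_def differentiable_at_iff_field_differentiable)

lemma dy_add:
  "y_differentiable h1 \<Longrightarrow> y_differentiable h2 \<Longrightarrow> dy (\<lambda>p. h1 p + h2 p) = (\<lambda>p. dy h1 p + dy h2 p)"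
  by (auto simp: dy_apply y_differentiable_def differentiable_at_iff_field_differentiable)

lemma dx_mult:
  "x_differentiable h1 \<Longrightarrow> x_differentiable h2 \<Longrightarrow>
    dx (\<lambda>p. h1 p * h2 p) = (\<lambda>p. h1 p * dx h2 p + dx h1 p * h2 p)"
  by (auto simp: dx_apply x_differentiable_def differentiable_at_iff_field_differentiable)

lemma dy_mult:
  "y_differentiable h1 \<Longrightarrow> y_differentiable h2 \<Longrightarrow>
    dy (\<lambda>p. h1 p * h2 p) = (\<lambda>p. h1 p * dy h2 p + dy h1 p * h2 p)"
  by (auto simp: dy_apply y_differentiable_def differentiable_at_iff_field_differentiable)

lemma dx_const: "dx (\<lambda>p. c) = (\<lambda>p. 0)" and dy_const: "dy (\<lambda>p. c) = (\<lambda>p. 0)"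
  by (auto simp: dx_def dy_def)

lemma dx_eq_on_open:
  assumes "open U" and eq: "\<And>q. q \<in> U \<Longrightarrow> f q = k q" and "p \<in> U"
  shows "dx f p = dx k p"
proof -
  obtain x y where p: "p = (x, y)" by fastforce
  obtain e where "e > 0" and e: "ball p e \<subseteq> U" using assms open_contains_ball by blast
  have near: "(s, y) \<in> ball p e" if "s \<in> ball x e" for s
    using that by (simp add: p dist_Pair_Pair dist_commute)
  have "\<forall>\<^sub>F s in nhds x. s \<in> ball x e"
    using \<open>e > 0\<close> by (intro eventually_nhds_in_open) auto
  then have "\<forall>\<^sub>F s in nhds x. f (s, y) = k (s, y)"
    by (rule eventually_mono) (use near e eq in blast)
  then show ?thesis unfolding p dx_def by (auto intro: deriv_cong_ev)
qed

lemma dx_exp_tensor: "dx (\<lambda>p. exp (fst p) * g (snd p)) = (\<lambda>p. exp (fst p) * g (snd p))"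
  by (auto simp: dx_apply intro!: DERIV_imp_deriv DERIV_cmult_right[OF DERIV_exp])

lemma regular_xy_const: "regular_xy (\<lambda>p. c)"
  by (simp add: regular_xy_def x_differentiable_def y_differentiable_def)

lemma regular_xy_add: "regular_xy h1 \<Longrightarrow> regular_xy h2 \<Longrightarrow> regular_xy (\<lambda>p. h1 p + h2 p)"
  unfolding regular_xy_def x_differentiable_def y_differentiable_def
  by (auto intro!: continuous_on_add)

lemma regular_xy_mult: "regular_xy h1 \<Longrightarrow> regular_xy h2 \<Longrightarrow> regular_xy (\<lambda>p. h1 p * h2 p)"
  unfolding regular_xy_def x_differentiable_def y_differentiable_def
  by (auto intro!: continuous_on_mult)

lemma smooth2_if_closed:
  assumes closed: "\<forall>g\<in>G. regular_xy g \<and> dx g \<in> G \<and> dy g \<in> G" and "f \<in> G"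
  shows "smooth2 f"
proof -
  have "g \<in> G" if "g \<in> partials f" for g
    using that by (induction rule: partials.induct) (use assms in auto)
  then show ?thesis using closed unfolding smooth2_iff_partials_regular by blast
qed

lemma smooth2_dx: "smooth2 f \<Longrightarrow> smooth2 (dx f)"
  by (rule smooth2_if_closed[of "partials f"])
    (auto simp: smooth2_iff_partials_regular intro: partials.intros)

text \<open>Partials of a product are sums of products of partials, so the functions generated in this
  way from partials of f and g are closed under dx and dy; this is how smoothness passes to products.\<close>

inductive_set sum_products :: "fn2 set \<Rightarrow> fn2 set" for S where
  prod: "A \<in> S \<Longrightarrow> B \<in> S \<Longrightarrow> (\<lambda>p. A p * B p) \<in> sum_products S"
| add: "h1 \<in> sum_products S \<Longrightarrow> h2 \<in> sum_products S \<Longrightarrow> (\<lambda>p. h1 p + h2 p) \<in> sum_products S"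

lemma sum_products_closed:
  assumes S: "\<forall>A\<in>S. regular_xy A \<and> dx A \<in> S \<and> dy A \<in> S"
  shows "\<forall>h\<in>sum_products S. regular_xy h \<and> dx h \<in> sum_products S \<and> dy h \<in> sum_products S"
proof
  fix h assume "h \<in> sum_products S"
  then show "regular_xy h \<and> dx h \<in> sum_products S \<and> dy h \<in> sum_products S"
  proof (induction rule: sum_products.induct)
    case (prod A B)
    then have "regular_xy A" "regular_xy B" "dx A \<in> S" "dy A \<in> S" "dx B \<in> S" "dy B \<in> S"
      using S by auto
    moreover from this have "x_differentiable A" "x_differentiable B"
      "y_differentiable A" "y_differentiable B" by (auto simp: regular_xy_def)
    ultimately show ?case using prod
      by (simp add: regular_xy_mult dx_mult dy_mult sum_products.intros)
  next
    case (add h1 h2)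
    then have "x_differentiable h1" "x_differentiable h2" "y_differentiable h1" "y_differentiable h2"
      by (auto simp: regular_xy_def)
    with add show ?case by (simp add: regular_xy_add dx_add dy_add sum_products.intros)
  qed
qed

lemma smooth2_sum_products:
  assumes "smooth2 f" "smooth2 g" "h \<in> sum_products (partials f \<union> partials g \<union> range (\<lambda>c p. c))"
  shows "smooth2 h"
proof -
  let ?S = "partials f \<union> partials g \<union> range (\<lambda>c p. c)"
  have "\<forall>A\<in>?S. regular_xy A \<and> dx A \<in> ?S \<and> dy A \<in> ?S"
    using assms(1,2) unfolding smooth2_iff_partials_regular
    by (auto simp: dx_const dy_const regular_xy_const intro: partials.intros)
  from smooth2_if_closed[OF sum_products_closed[OF this] assms(3)] show ?thesis .
qed

lemma smooth2_mult: "smooth2 f \<Longrightarrow> smooth2 g \<Longrightarrow> smooth2 (\<lambda>p. f p * g p)"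
  by (erule smooth2_sum_products, assumption) (auto intro: sum_products.prod partials.self)

lemma smooth2_add:
  assumes "smooth2 f" "smooth2 g"
  shows "smooth2 (\<lambda>p. f p + g p)"
proof -
  have "(\<lambda>p. f p * 1 + g p * 1) \<in> sum_products (partials f \<union> partials g \<union> range (\<lambda>c p. c))"
    by (intro sum_products.intros) (auto intro: partials.self rangeI)
  from smooth2_sum_products[OF assms this] show ?thesis by simp
qed

lemma smooth2_diff:
  assumes "smooth2 f" "smooth2 g"
  shows "smooth2 (\<lambda>p. f p - g p)"
proof -
  have "(\<lambda>p. f p * 1 + g p * (-1)) \<in> sum_products (partials f \<union> partials g \<union> range (\<lambda>c p. c))"
    by (intro sum_products.intros) (auto intro: partials.self rangeI)
  from smooth2_sum_products[OF assms this] show ?thesis by simp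
qed

lemma smooth2_tensor:
  assumes a: "smooth1 a" and b: "smooth1 b"
  shows "smooth2 (\<lambda>p. a (fst p) * b (snd p))"
proof (rule smooth2_if_closed)
  let ?g = "\<lambda>(m, n) p. (deriv ^^ m) a (fst p) * (deriv ^^ n) b (snd p)"
  show "(\<lambda>p. a (fst p) * b (snd p)) \<in> range ?g" by (auto intro!: image_eqI[of _ _ "(0, 0)"])
  have da: "(deriv ^^ m) a differentiable at x" and db: "(deriv ^^ m) b differentiable at x" for m x
    using a b by (auto simp: smooth1_def)
  have ca: "continuous_on UNIV ((deriv ^^ m) a)" and cb: "continuous_on UNIV ((deriv ^^ m) b)" for m
    using da db by (auto intro!: continuous_at_imp_continuous_on differentiable_imp_continuous_within)
  show "\<forall>g\<in>range ?g. regular_xy g \<and> dx g \<in> range ?g \<and> dy g \<in> range ?g"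
  proof
    fix g assume "g \<in> range ?g"
    then obtain m n where g: "g = ?g (m, n)" by auto
    have "dx (?g (m, n)) = ?g (Suc m, n)" "dy (?g (m, n)) = ?g (m, Suc n)"
      using da db by (auto simp: dx_apply dy_apply differentiable_at_iff_field_differentiable)
    moreover have "regular_xy (?g (m, n))"
      unfolding regular_xy_def x_differentiable_def y_differentiable_def
      using da db
      by (auto intro!: continuous_on_mult continuous_on_compose2[OF ca] continuous_on_compose2[OF cb]
          continuous_on_fst continuous_on_snd differentiable_mult)
    ultimately show "regular_xy g \<and> dx g \<in> range ?g \<and> dy g \<in> range ?g"
      unfolding g by blast
  qed
qed

lemma smooth2_const: "smooth2 (\<lambda>p. c)"
  using smooth2_tensor[OF smooth1_const[of c] smooth1_const[of 1]] by simp

section \<open>Test functions\<close>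

lemma closed_tsupp: "closed (tsupp f)"
  by (simp add: tsupp_def)

lemma in_tsupp: "f p \<noteq> 0 \<Longrightarrow> p \<in> tsupp f"
  using closure_subset[of "{p. f p \<noteq> 0}"] unfolding tsupp_def by auto

lemma notin_tsupp: "p \<notin> tsupp f \<Longrightarrow> f p = 0"
  using in_tsupp by blast

lemma tsupp_subset: "(\<And>p. f p \<noteq> 0 \<Longrightarrow> p \<in> C) \<Longrightarrow> closed C \<Longrightarrow> tsupp f \<subseteq> C"
  unfolding tsupp_def by (rule closure_minimal) auto

lemma tsupp_subset_compl_open: "open U \<Longrightarrow> (\<And>p. p \<in> U \<Longrightarrow> f p = 0) \<Longrightarrow> tsupp f \<subseteq> - U"
  by (rule tsupp_subset) auto

lemma tsupp_mult: "tsupp (\<lambda>p. f p * g p) \<subseteq> tsupp f \<inter> tsupp g"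
  by (rule tsupp_subset) (auto simp: closed_Int closed_tsupp intro: in_tsupp)

lemma tsupp_add: "tsupp (\<lambda>p. f p + g p) \<subseteq> tsupp f \<union> tsupp g"
proof (rule tsupp_subset)
  fix p assume "f p + g p \<noteq> 0"
  then have "f p \<noteq> 0 \<or> g p \<noteq> 0" by auto
  then show "p \<in> tsupp f \<union> tsupp g" using in_tsupp by blast
qed (simp add: closed_Un closed_tsupp)

lemma tsupp_dx: "tsupp (dx f) \<subseteq> tsupp f"
proof -
  have "dx f p = dx (\<lambda>p. 0) p" if "p \<in> - tsupp f" for p
    using that closed_tsupp by (intro dx_eq_on_open[of "- tsupp f"]) (auto simp: notin_tsupp)
  then have "tsupp (dx f) \<subseteq> - (- tsupp f)"
    using closed_tsupp by (intro tsupp_subset_compl_open) (auto simp: dx_const)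
  then show ?thesis by simp
qed

lemma compact_tsupp_subset: "compact K \<Longrightarrow> tsupp f \<subseteq> K \<Longrightarrow> compact (tsupp f)"
  using compact_Int_closed[of K "tsupp f"] closed_tsupp by (simp add: Int_absorb1)

lemma test_fun_mult: "smooth2 g \<Longrightarrow> test_fun f \<Longrightarrow> test_fun (\<lambda>p. g p * f p)"
  unfolding test_fun_def using tsupp_mult[of g f] compact_tsupp_subset
  by (auto intro: smooth2_mult)

lemma test_fun_add: "test_fun f \<Longrightarrow> test_fun g \<Longrightarrow> test_fun (\<lambda>p. f p + g p)"
  unfolding test_fun_def using tsupp_add[of f g] compact_tsupp_subset[OF compact_Un]
  by (auto intro: smooth2_add)

lemma tsupp_diff: "tsupp (\<lambda>p. f p - g p) \<subseteq> tsupp f \<union> tsupp g"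
proof (rule tsupp_subset)
  fix p assume "f p - g p \<noteq> 0"
  then have "f p \<noteq> 0 \<or> g p \<noteq> 0" by auto
  then show "p \<in> tsupp f \<union> tsupp g" using in_tsupp by blast
qed (simp add: closed_Un closed_tsupp)

lemma test_fun_diff: "test_fun f \<Longrightarrow> test_fun g \<Longrightarrow> test_fun (\<lambda>p. f p - g p)"
  unfolding test_fun_def using tsupp_diff[of f g] compact_tsupp_subset[OF compact_Un]
  by (auto intro: smooth2_diff)

lemma test_fun_dx: "test_fun f \<Longrightarrow> test_fun (dx f)"
  unfolding test_fun_def using smooth2_dx tsupp_dx compact_tsupp_subset by blast

lemma test_fun_zero: "test_fun (\<lambda>p. 0)"
  unfolding test_fun_def tsupp_def by (simp add: smooth2_const)

lemma test_fun_sum: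
  "finite I \<Longrightarrow> (\<And>j. j \<in> I \<Longrightarrow> test_fun (f j)) \<Longrightarrow> test_fun (\<lambda>p. \<Sum>j\<in>I. f j p)"
  by (induction I rule: finite_induct) (auto intro: test_fun_zero test_fun_add)

lemma integrable_loc_int_mult:
  assumes w: "loc_int w" and \<psi>: "test_fun \<psi>"
  shows "integrable lborel (\<lambda>p. w p * \<psi> p)"
proof -
  let ?K = "tsupp \<psi>"
  have c: "continuous_on UNIV \<psi>" and K: "compact ?K"
    using \<psi> by (auto simp: test_fun_def smooth2_def intro: partials.self)
  have wK: "integrable lborel (\<lambda>p. indicator ?K p *\<^sub>R w p)"
    using w K unfolding loc_int_def set_integrable_def by blast
  obtain C where C: "\<And>p. \<bar>\<psi> p\<bar> \<le> C"
  proof -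
    obtain C where "\<forall>z\<in>\<psi> ` ?K. norm z \<le> C"
      using compact_imp_bounded[OF compact_continuous_image[OF continuous_on_subset[OF c] K]]
      by (auto simp: bounded_iff)
    then have "\<bar>\<psi> p\<bar> \<le> max C 0" for p by (cases "p \<in> ?K") (auto simp: notin_tsupp)
    then show thesis using that by blast
  qed
  have eq: "(\<lambda>p. w p * \<psi> p) = (\<lambda>p. (indicator ?K p *\<^sub>R w p) * \<psi> p)"
  proof
    fix p show "w p * \<psi> p = (indicator ?K p *\<^sub>R w p) * \<psi> p"
      by (cases "p \<in> ?K") (auto simp: notin_tsupp)
  qed
  show ?thesis unfolding eq
  proof (rule Bochner_Integration.integrable_bound[OF integrable_mult_right[OF wK, of C]])
    show "(\<lambda>p. (indicator ?K p *\<^sub>R w p) * \<psi> p) \<in> borel_measurable lborel"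
      using borel_measurable_integrable[OF wK] borel_measurable_continuous_onI[OF c] by simp
    have "\<bar>\<psi> p\<bar> \<le> \<bar>C\<bar>" for p using C[of p] by linarith
    then have "norm (indicator ?K p *\<^sub>R w p * \<psi> p) \<le> norm (C * (indicator ?K p *\<^sub>R w p))" for p
      using mult_left_mono[of "\<bar>\<psi> p\<bar>" "\<bar>C\<bar>" "\<bar>indicator ?K p *\<^sub>R w p\<bar>"]
      by (simp add: abs_mult mult.commute)
    then show "AE p in lborel. norm (indicator ?K p *\<^sub>R w p * \<psi> p) \<le> norm (C * (indicator ?K p *\<^sub>R w p))"
      by simp
  qed
qed

section \<open>Distributions additive on test functions\<close>

definition test_additive :: "distr \<Rightarrow> bool" where
  "test_additive T \<longleftrightarrow>
     (\<forall>\<phi> \<psi>. test_fun \<phi> \<longrightarrow> test_fun \<psi> \<longrightarrow> T (\<lambda>p. \<phi> p + \<psi> p) = T \<phi> + T \<psi>)"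

lemma test_additiveD:
  "test_additive T \<Longrightarrow> test_fun \<phi> \<Longrightarrow> test_fun \<psi> \<Longrightarrow> T (\<lambda>p. \<phi> p + \<psi> p) = T \<phi> + T \<psi>"
  by (simp add: test_additive_def)

lemma test_additive_zero: "test_additive T \<Longrightarrow> T (\<lambda>p. 0) = 0"
  using test_additiveD[of T "\<lambda>p. 0" "\<lambda>p. 0"] test_fun_zero by simp

lemma test_additive_diff:
  assumes "test_additive T" "test_fun \<phi>" "test_fun \<psi>"
  shows "T (\<lambda>p. \<phi> p - \<psi> p) = T \<phi> - T \<psi>"
  using test_additiveD[OF assms(1) test_fun_diff[OF assms(2,3)] assms(3)] by simp

lemma test_additive_sum:
  assumes "test_additive T" "finite I" "\<And>j. j \<in> I \<Longrightarrow> test_fun (f j)"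
  shows "T (\<lambda>p. \<Sum>j\<in>I. f j p) = (\<Sum>j\<in>I. T (f j))"
  using assms(2,3)
proof (induction I rule: finite_induct)
  case empty then show ?case using test_additive_zero[OF assms(1)] by simp
next
  case (insert j I)
  then show ?case by (simp add: test_additiveD[OF assms(1)] test_fun_sum)
qed

lemma test_additive_fdistr: "loc_int w \<Longrightarrow> test_additive (fdistr w)"
  unfolding test_additive_def fdistr_def
  by (simp add: distrib_left integrable_loc_int_mult)

lemma test_additive_dminus: "test_additive S \<Longrightarrow> test_additive T \<Longrightarrow> test_additive (dminus S T)"
  by (simp add: test_additive_def dminus_def)

lemma test_additive_dmult: "smooth2 E \<Longrightarrow> test_additive T \<Longrightarrow> test_additive (dmult E T)"
  unfolding test_additive_def dmult_def by (simp add: distrib_left test_fun_mult)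

lemma test_additive_ddx:
  assumes "test_additive T"
  shows "test_additive (ddx T)"
proof -
  have "dx (\<lambda>p. \<phi> p + \<psi> p) = (\<lambda>p. dx \<phi> p + dx \<psi> p)" if "test_fun \<phi>" "test_fun \<psi>" for \<phi> \<psi>
    using that by (intro dx_add)
      (auto simp: test_fun_def smooth2_iff_partials_regular regular_xy_def intro: partials.self)
  with assms show ?thesis by (simp add: test_additive_def ddx_def test_fun_dx)
qed

lemma dsupp_mono:
  "(\<And>V. open V \<Longrightarrow> vanishes_on T V \<Longrightarrow> vanishes_on S V) \<Longrightarrow> dsupp S \<subseteq> dsupp T"
  unfolding dsupp_def by blast

lemma dsupp_ddx: "dsupp (ddx T) \<subseteq> dsupp T"
  by (rule dsupp_mono) (auto simp: vanishes_on_def ddx_def test_fun_dx dest: order_trans[OF tsupp_dx])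

lemma dsupp_dmult:
  assumes "smooth2 E"
  shows "dsupp (dmult E T) \<subseteq> dsupp T"
proof (rule dsupp_mono)
  fix V assume "vanishes_on T V"
  moreover have "test_fun (\<lambda>p. E p * \<phi> p) \<and> tsupp (\<lambda>p. E p * \<phi> p) \<subseteq> V"
    if "test_fun \<phi>" "tsupp \<phi> \<subseteq> V" for \<phi>
    using that assms tsupp_mult[of E \<phi>] by (auto intro: test_fun_mult)
  ultimately show "vanishes_on (dmult E T) V" by (simp add: vanishes_on_def dmult_def)
qed

lemma dsupp_dminus: "dsupp (dminus S T) \<subseteq> dsupp S \<union> dsupp T"
proof -
  have "vanishes_on (dminus S T) (V \<inter> W)" if "vanishes_on S V" "vanishes_on T W" for V W
    using that by (simp add: vanishes_on_def dminus_def)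
  then show ?thesis unfolding dsupp_def by blast
qed

section \<open>Localisation to the support\<close>

definition partition_bump :: "real \<Rightarrow> nat \<Rightarrow> nat \<Rightarrow> real \<Rightarrow> real" where
  "partition_bump d N i t =
     smooth_step (t / d + real N - real i + 1) - smooth_step (t / d + real N - real i)"

lemma smooth1_partition_bump: "smooth1 (partition_bump d N i)"
proof -
  have "smooth1 (\<lambda>t. smooth_step ((1 / d) * t + (real N - real i + 1))
      + (-1) * smooth_step ((1 / d) * t + (real N - real i)))"
    by (intro smooth1_add smooth1_mult smooth1_const smooth1_affine smooth1_smooth_step)
  then show ?thesis by (simp add: partition_bump_def[abs_def] algebra_simps)
qed

lemma sum_partition_bump:
  assumes "d > 0" and "\<bar>t\<bar> \<le> real N * d"
  shows "(\<Sum>i<2 * N + 1. partition_bump d N i t) = 1"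
proof -
  define s where "s i = smooth_step (t / d + real N - real i + 1)" for i :: nat
  have "(\<Sum>i<2 * N + 1. partition_bump d N i t) = s 0 - s (2 * N + 1)"
    using sum_lessThan_telescope'[of s "2 * N + 1"]
    by (simp add: s_def partition_bump_def algebra_simps)
  moreover have "- real N \<le> t / d" "t / d \<le> real N"
    using assms by (auto simp: field_simps abs_le_iff)
  ultimately show ?thesis by (simp add: s_def smooth_step_eq_0 smooth_step_eq_1)
qed

lemma partition_bump_nonzero:
  assumes "d > 0" and "partition_bump d N i t \<noteq> 0"
  shows "t \<in> {d * (real i - real N - 1) .. d * (real i - real N + 1)}"
proof -
  define c where "c = t / d + real N - real i"
  have "\<not> c + 1 \<le> 0" "\<not> c \<ge> 1"
    using assms(2) smooth_step_eq_0[of "c + 1"] smooth_step_eq_0[of c]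
      smooth_step_eq_1[of "c + 1"] smooth_step_eq_1[of c]
    by (auto simp: partition_bump_def c_def)
  then show ?thesis using assms(1) by (auto simp: c_def field_simps)
qed

lemma fine_smooth_partition_of_unity:
  assumes "bounded K" and "e > 0"
  obtains I :: "(nat \<times> nat) set" and \<theta> :: "nat \<times> nat \<Rightarrow> fn2"
  where "finite I" "\<And>j. j \<in> I \<Longrightarrow> smooth2 (\<theta> j)" "\<And>p. p \<in> K \<Longrightarrow> (\<Sum>j\<in>I. \<theta> j p) = 1"
    "\<And>j p q. j \<in> I \<Longrightarrow> p \<in> tsupp (\<theta> j) \<Longrightarrow> q \<in> tsupp (\<theta> j) \<Longrightarrow> dist p q < e"
proof -
  define d where "d = e / 5"
  have "d > 0" using assms(2) by (simp add: d_def)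
  obtain B where B: "\<And>p. p \<in> K \<Longrightarrow> norm p \<le> B" using assms(1) by (auto simp: bounded_iff)
  define N where "N = nat \<lceil>B / d\<rceil>"
  have "B \<le> real N * d" using \<open>d > 0\<close> by (simp add: N_def pos_divide_le_eq[symmetric]) linarith
  define I where "I = {..<2 * N + 1} \<times> {..<2 * N + 1}"
  define \<theta> where "\<theta> j p = partition_bump d N (fst j) (fst p) * partition_bump d N (snd j) (snd p)"
    for j :: "nat \<times> nat" and p :: "real \<times> real"
  show thesis
  proof
    show "finite I" by (simp add: I_def)
    show "smooth2 (\<theta> j)" for j
      unfolding \<theta>_def by (intro smooth2_tensor smooth1_partition_bump)
    show "(\<Sum>j\<in>I. \<theta> j p) = 1" if "p \<in> K" for p
    proof -
      have "\<bar>fst p\<bar> \<le> norm p" "\<bar>snd p\<bar> \<le> norm p"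
        using norm_fst_le[of "fst p" "snd p"] norm_snd_le[of "snd p" "fst p"] by simp_all
      then have "\<bar>fst p\<bar> \<le> real N * d" "\<bar>snd p\<bar> \<le> real N * d"
        using B[OF that] \<open>B \<le> real N * d\<close> by linarith+
      moreover have "(\<Sum>j\<in>I. \<theta> j p) = (\<Sum>i<2 * N + 1. partition_bump d N i (fst p))
          * (\<Sum>i<2 * N + 1. partition_bump d N i (snd p))"
        unfolding I_def \<theta>_def sum_product sum.cartesian_product by (simp add: case_prod_beta)
      ultimately show ?thesis by (metis sum_partition_bump[OF \<open>d > 0\<close>] mult_1)
    qed
    show "dist p q < e" if "p \<in> tsupp (\<theta> j)" "q \<in> tsupp (\<theta> j)" for j p q
    proof -
      let ?Q = "{d * (real (fst j) - real N - 1) .. d * (real (fst j) - real N + 1)} \<times>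
                {d * (real (snd j) - real N - 1) .. d * (real (snd j) - real N + 1)}"
      have "tsupp (\<theta> j) \<subseteq> ?Q"
        by (rule tsupp_subset) (use partition_bump_nonzero[OF \<open>d > 0\<close>] in
            \<open>auto simp: \<theta>_def mem_Times_iff intro: closed_Times\<close>)
      then have "p \<in> ?Q" "q \<in> ?Q" using that by blast+
      then have "\<bar>fst p - fst q\<bar> \<le> 2 * d" "\<bar>snd p - snd q\<bar> \<le> 2 * d"
        by (auto simp: abs_le_iff algebra_simps)
      moreover have "p - q = (fst p - fst q, snd p - snd q)" by (simp add: prod_eq_iff)
      ultimately have "dist p q \<le> 4 * d"
        using norm_Pair_le[of "fst p - fst q" "snd p - snd q"] by (simp add: dist_norm)
      then show ?thesis using \<open>d > 0\<close> by (simp add: d_def)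
    qed
  qed
qed

lemma vanishes_on_compl_dsupp:
  assumes T: "test_additive T"
  shows "vanishes_on T (- dsupp T)"
  unfolding vanishes_on_def
proof (intro allI impI, elim conjE)
  fix \<phi> assume \<phi>: "test_fun \<phi>" and supp: "tsupp \<phi> \<subseteq> - dsupp T"
  let ?G = "{V. open V \<and> vanishes_on T V}"
  have K: "compact (tsupp \<phi>)" using \<phi> by (simp add: test_fun_def)
  moreover have "tsupp \<phi> \<subseteq> \<Union>?G" using supp by (simp add: dsupp_def)
  ultimately obtain e where "e > 0" and e: "\<And>p. p \<in> tsupp \<phi> \<Longrightarrow> \<exists>G\<in>?G. ball p e \<subseteq> G"
    by (rule Heine_Borel_lemma) auto
  obtain I and \<theta> :: "nat \<times> nat \<Rightarrow> fn2" where I: "finite I" and \<theta>: "\<And>j. j \<in> I \<Longrightarrow> smooth2 (\<theta> j)"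
    and sum_\<theta>: "\<And>p. p \<in> tsupp \<phi> \<Longrightarrow> (\<Sum>j\<in>I. \<theta> j p) = 1"
    and small: "\<And>j p q. j \<in> I \<Longrightarrow> p \<in> tsupp (\<theta> j) \<Longrightarrow> q \<in> tsupp (\<theta> j) \<Longrightarrow> dist p q < e"
    using fine_smooth_partition_of_unity[OF compact_imp_bounded[OF K] \<open>e > 0\<close>] by blast
  define f where "f j p = \<theta> j p * \<phi> p" for j p
  have f: "test_fun (f j)" if "j \<in> I" for j
    unfolding f_def using test_fun_mult[OF \<theta>[OF that] \<phi>] .
  have "\<phi> = (\<lambda>p. \<Sum>j\<in>I. f j p)"
  proof
    fix p show "\<phi> p = (\<Sum>j\<in>I. f j p)"
      using sum_\<theta>[of p] notin_tsupp[of p \<phi>]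
      by (cases "p \<in> tsupp \<phi>") (simp_all add: f_def sum_distrib_right[symmetric])
  qed
  then have "T \<phi> = (\<Sum>j\<in>I. T (f j))"
    using test_additive_sum[OF T I f] by simp
  moreover have "T (f j) = 0" if j: "j \<in> I" for j
  proof (cases "tsupp (f j) = {}")
    case True
    then have "f j = (\<lambda>p. 0)" using notin_tsupp by blast
    then show ?thesis using test_additive_zero[OF T] by simp
  next
    case False
    then obtain p0 where p0: "p0 \<in> tsupp (f j)" by blast
    have sub: "tsupp (f j) \<subseteq> tsupp (\<theta> j) \<inter> tsupp \<phi>" unfolding f_def by (rule tsupp_mult)
    then obtain G where "vanishes_on T G" and G: "ball p0 e \<subseteq> G" using e p0 by blast
    moreover have "tsupp (f j) \<subseteq> ball p0 e"
    proof
      fix q assume "q \<in> tsupp (f j)"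
      then show "q \<in> ball p0 e" using sub small[OF j, of p0 q] p0 by auto
    qed
    ultimately show ?thesis using f[OF j] unfolding vanishes_on_def by blast
  qed
  ultimately show "T \<phi> = 0" by simp
qed

lemma test_additive_vanishes_near_dsupp:
  assumes "test_additive T" "test_fun \<phi>" "open U" "dsupp T \<subseteq> U" "\<And>q. q \<in> U \<Longrightarrow> \<phi> q = 0"
  shows "T \<phi> = 0"
proof -
  have "tsupp \<phi> \<subseteq> - dsupp T" using tsupp_subset_compl_open[of U \<phi>] assms(3-5) by blast
  then show ?thesis using vanishes_on_compl_dsupp[OF assms(1)] assms(2) by (simp add: vanishes_on_def)
qed

section \<open>The duality pairing\<close>

definition is_cutoff :: "distr \<Rightarrow> fn2 \<Rightarrow> bool" where
  "is_cutoff T chi \<longleftrightarrow> test_fun chi \<and> (\<exists>U. open U \<and> dsupp T \<subseteq> U \<and> (\<forall>q\<in>U. chi q = 1))"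

lemma pairE_eq_cutoff:
  assumes T: "test_additive T" and "is_cutoff T chi" and \<psi>: "smooth2 \<psi>"
  shows "pairE T \<psi> = T (\<lambda>p. chi p * \<psi> p)"
proof -
  define chi0 where "chi0 = (SOME chi. is_cutoff T chi)"
  have "is_cutoff T chi0" unfolding chi0_def using \<open>is_cutoff T chi\<close> by (rule someI[of "is_cutoff T"])
  then obtain U0 where chi0: "test_fun chi0" and U0: "open U0" "dsupp T \<subseteq> U0" "\<forall>q\<in>U0. chi0 q = 1"
    by (auto simp: is_cutoff_def)
  obtain U where chi: "test_fun chi" and U: "open U" "dsupp T \<subseteq> U" "\<forall>q\<in>U. chi q = 1"
    using \<open>is_cutoff T chi\<close> by (auto simp: is_cutoff_def)
  have test: "test_fun (\<lambda>p. c p * \<psi> p)" if "test_fun c" for c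
    using test_fun_mult[OF \<psi> that] by (simp add: mult.commute)
  have "T (\<lambda>p. chi0 p * \<psi> p) - T (\<lambda>p. chi p * \<psi> p) = T (\<lambda>p. chi0 p * \<psi> p - chi p * \<psi> p)"
    using test_additive_diff[OF T test[OF chi0] test[OF chi]] by simp
  also have "\<dots> = 0"
    using U0 U test_fun_diff[OF test[OF chi0] test[OF chi]]
    by (intro test_additive_vanishes_near_dsupp[OF T _ open_Int[OF U0(1) U(1)]]) auto
  finally show ?thesis by (simp add: pairE_def chi0_def is_cutoff_def)
qed

lemma exists_cutoff_function:
  assumes "bounded K"
  obtains chi U where "test_fun chi" "open U" "K \<subseteq> U" "\<And>q. q \<in> U \<Longrightarrow> chi q = 1"
proof -
  obtain R where R: "\<And>p. p \<in> K \<Longrightarrow> norm p \<le> R" using assms by (auto simp: bounded_iff)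
  define b where "b s = smooth_step (1 * s + (R + 2)) * smooth_step ((-1) * s + (R + 2))" for s
  define chi where "chi p = b (fst p) * b (snd p)" for p :: "real \<times> real"
  define U where "U = {-(R + 1) <..< R + 1} \<times> {-(R + 1) <..< R + 1}"
  have "smooth1 b" unfolding b_def[abs_def]
    by (intro smooth1_mult smooth1_affine smooth1_smooth_step)
  moreover have "tsupp chi \<subseteq> {-(R + 2) .. R + 2} \<times> {-(R + 2) .. R + 2}"
  proof (rule tsupp_subset)
    have "b s \<noteq> 0 \<Longrightarrow> s \<in> {-(R + 2) .. R + 2}" for s
      by (cases "s \<le> -(R + 2)"; cases "s \<ge> R + 2") (auto simp: b_def smooth_step_eq_0)
    then show "p \<in> {-(R + 2) .. R + 2} \<times> {-(R + 2) .. R + 2}" if "chi p \<noteq> 0" for p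
      using that by (auto simp: chi_def mem_Times_iff)
  qed (intro closed_Times closed_atLeastAtMost)
  ultimately show thesis
  proof (intro that)
    show "test_fun chi" using \<open>smooth1 b\<close> \<open>tsupp chi \<subseteq> _\<close> unfolding test_fun_def chi_def[abs_def]
      by (auto intro: smooth2_tensor compact_tsupp_subset[OF compact_Times[OF compact_Icc compact_Icc]])
    show "open U" unfolding U_def by (intro open_Times open_greaterThanLessThan)
    show "chi q = 1" if "q \<in> U" for q
      using that by (auto simp: U_def chi_def b_def smooth_step_eq_1 mem_Times_iff)
    show "K \<subseteq> U"
    proof
      fix p assume "p \<in> K"
      moreover have "\<bar>fst p\<bar> \<le> norm p" "\<bar>snd p\<bar> \<le> norm p"
        using norm_fst_le[of "fst p" "snd p"] norm_snd_le[of "snd p" "fst p"] by simp_all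
      ultimately show "p \<in> U" using R[of p] by (auto simp: U_def mem_Times_iff abs_le_iff)
    qed
  qed
qed

lemma pairE_dmult_dminus_ddx_ddx_eq_0:
  assumes F: "test_additive F" and "compact (dsupp F)" and E: "smooth2 E" "dx (dx E) = E"
  shows "pairE (dmult E (dminus F (ddx (ddx F)))) (\<lambda>_. 1) = 0"
proof -
  define S where "S = dmult E (dminus F (ddx (ddx F)))"
  have S: "test_additive S" unfolding S_def using F E(1)
    by (intro test_additive_dmult test_additive_dminus test_additive_ddx)
  have "dsupp S \<subseteq> dsupp F" unfolding S_def using dsupp_dmult[OF E(1)] dsupp_dminus dsupp_ddx by blast
  obtain chi U where chi: "test_fun chi" and U: "open U" "dsupp F \<subseteq> U" "\<And>q. q \<in> U \<Longrightarrow> chi q = 1"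
    using exists_cutoff_function[OF compact_imp_bounded[OF \<open>compact (dsupp F)\<close>]] by metis
  define h where "h = (\<lambda>p. E p * chi p)"
  have h: "test_fun h" "test_fun (dx (dx h))"
    unfolding h_def using chi E(1) by (simp_all add: test_fun_mult test_fun_dx)
  have h_eq: "h q = E q" if "q \<in> U" for q using U(3) that by (simp add: h_def)
  have dx_h: "dx h q = dx E q" if "q \<in> U" for q
    using dx_eq_on_open[OF U(1) h_eq that] .
  have dx_dx_h: "dx (dx h) q = E q" if "q \<in> U" for q
    using dx_eq_on_open[OF U(1) dx_h that] E(2) by simp
  have "is_cutoff S chi"
    unfolding is_cutoff_def using chi U \<open>dsupp S \<subseteq> dsupp F\<close> by blast
  then have "pairE S (\<lambda>_. 1) = S chi"
    using pairE_eq_cutoff[OF S _ smooth2_const, of chi 1] by simp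
  also have "S chi = F h - F (dx (dx h))"
    by (simp add: S_def dmult_def dminus_def ddx_def h_def)
  also have "\<dots> = F (\<lambda>p. h p - dx (dx h) p)"
    using test_additive_diff[OF F h] by simp
  also have "\<dots> = 0"
    using U h_eq dx_dx_h by (intro test_additive_vanishes_near_dsupp[OF F test_fun_diff[OF h]]) auto
  finally show ?thesis unfolding S_def .
qed

theorem lemma2p9:
  fixes T :: real and u :: "real \<Rightarrow> real \<times> real \<Rightarrow> real"
  assumes "T > 0"
    and "bbm_kp_solution T u"
    and "\<forall>t\<in>{-T..T}. compact (dsupp (fdistr (u t)))"
  shows "\<forall>t\<in>{-T..T}. \<forall>g. smooth1 g \<longrightarrow>
           pairE (dmult (\<lambda>(x, y). exp x * g y)
                    (dminus (fdistr (u t)) (ddx (ddx (fdistr (u t)))))) (\<lambda>_. 1) = 0"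
proof (intro ballI allI impI)
  fix t g assume t: "t \<in> {-T..T}" and "smooth1 g"
  have E: "(\<lambda>(x, y). exp x * g y) = (\<lambda>p. exp (fst p) * g (snd p))" by auto
  have "test_additive (fdistr (u t))"
    using assms(2) t by (simp add: bbm_kp_solution_def test_additive_fdistr)
  moreover have "compact (dsupp (fdistr (u t)))" using assms(3) t by blast
  moreover have "smooth2 (\<lambda>p. exp (fst p) * g (snd p))"
    using \<open>smooth1 g\<close> by (simp add: smooth2_tensor smooth1_exp)
  ultimately show "pairE (dmult (\<lambda>(x, y). exp x * g y)
      (dminus (fdistr (u t)) (ddx (ddx (fdistr (u t)))))) (\<lambda>_. 1) = 0"
    unfolding E by (rule pairE_dmult_dminus_ddx_ddx_eq_0) (simp add: dx_exp_tensor)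
qed

end
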